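(* For each $n$, let $Y_i=f_0(\mathbf X_i)+\epsilon_i$ with $\boldsymbol\epsilon\sim\mathcal N(\mathbf 0,\boldsymbol\Sigma_n)$, all eigenvalues of $\boldsymbol\Sigma_n$ in $[\Psi_{low},\Psi_{high}]$ ($0<\Psi_{low}\le\Psi_{high}<\infty$), $f_0$ continuous, covariates $\mathbf X_i$ fixed in a compact subset of $\mathbb R^d$, and let $\mathbf Q_n$ be symmetric positive definite with all eigenvalues of $(\boldsymbol\Sigma_n^{1/2})^\top\mathbf Q_n\boldsymbol\Sigma_n^{1/2}$ in $(\Lambda_{low},\Lambda_{high})$, $0<\Lambda_{low}\le1\le\Lambda_{high}<\infty$. Let $L_n(f)=\mathbb E\big[\frac1n(\mathbf Y-\mathbf f(\mathbf X))^\top\mathbf Q_n(\mathbf Y-\mathbf f(\mathbf X))\big]$ and let $\pi_{r_n}f_0$ be the projection of $f_0$ onto $\mathcal F_n$ with respect to $\|\cdot\|_n$. Then for any $n$ and any $\delta\ge6\frac{\Psi_{high}\Lambda_{high}}{\Psi_{low}\Lambda_{low}}\|f_0-\pi_{r_n}f_0\|_n$, $$\inf_{f:\ \frac\delta2<\|f-\pi_{r_n}f_0\|_n<\delta}L_n(f)-L_n(\pi_{r_n}f_0)\ge\frac{\Lambda_{low}}{12\Psi_{high}}\delta^2.$$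
   Context: $\|f\|_n^2=\frac1n\sum_if(\mathbf X_i)^2$, $\mathbf f(\mathbf X)=(f(\mathbf X_i))_i$, $\boldsymbol\Sigma_n^{1/2}(\boldsymbol\Sigma_n^{1/2})^\top=\boldsymbol\Sigma_n$. $\mathcal F_n=\{\alpha_0+\sum_{j=1}^{r_n}\alpha_j\sigma(\boldsymbol\gamma_j^\top\mathbf x+\gamma_{0,j}):\sum_{j=0}^{r_n}|\alpha_j|\le V_n,\ \max_j\sum_{i=0}^d|\gamma_{i,j}|\le M_n\}$ for a bounded Lipschitz activation $\sigma$. The infimum is over real-valued functions $f$ on the covariate domain. *)

theory Defs
  imports "HOL-Analysis.Analysis" "HOL-Probability.Probability"
begin

text \<open>Vectors in R^n are functions nat => real on indices {..<n};
  n x n matrices are functions nat => nat => real on {..<n} x {..<n}.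
  Covariates live in R^d, modelled by the finite index type 'd.\<close>

definition emp_norm :: "nat \<Rightarrow> (nat \<Rightarrow> real^'d) \<Rightarrow> (real^'d \<Rightarrow> real) \<Rightarrow> real" where
  "emp_norm n X f = sqrt ((1 / real n) * (\<Sum>i<n. (f (X i))\<^sup>2))"

definition mat_eigenvalue :: "nat \<Rightarrow> (nat \<Rightarrow> nat \<Rightarrow> real) \<Rightarrow> real \<Rightarrow> bool" where
  "mat_eigenvalue n A lam \<longleftrightarrow>
     (\<exists>v :: nat \<Rightarrow> real. (\<exists>i<n. v i \<noteq> 0) \<and> (\<forall>i<n. (\<Sum>j<n. A i j * v j) = lam * v i))"

definition mat_symmetric :: "nat \<Rightarrow> (nat \<Rightarrow> nat \<Rightarrow> real) \<Rightarrow> bool" where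
  "mat_symmetric n A \<longleftrightarrow> (\<forall>i<n. \<forall>j<n. A i j = A j i)"

definition mat_pos_def :: "nat \<Rightarrow> (nat \<Rightarrow> nat \<Rightarrow> real) \<Rightarrow> bool" where
  "mat_pos_def n A \<longleftrightarrow> mat_symmetric n A \<and>
     (\<forall>v :: nat \<Rightarrow> real. (\<exists>i<n. v i \<noteq> 0) \<longrightarrow> (\<Sum>i<n. \<Sum>j<n. v i * A i j * v j) > 0)"

definition mat_sandwich :: "nat \<Rightarrow> (nat \<Rightarrow> nat \<Rightarrow> real) \<Rightarrow> (nat \<Rightarrow> nat \<Rightarrow> real) \<Rightarrow> nat \<Rightarrow> nat \<Rightarrow> real" where
  "mat_sandwich n S Q = (\<lambda>i j. \<Sum>k<n. \<Sum>l<n. S k i * Q k l * S l j)"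

text \<open>Multivariate normal N(0, S S^T) on R^n: law of S Z with Z a vector of n
  independent standard normal variables.\<close>
definition gaussian_vec :: "nat \<Rightarrow> (nat \<Rightarrow> nat \<Rightarrow> real) \<Rightarrow> (nat \<Rightarrow> real) measure" where
  "gaussian_vec n S =
     distr (PiM {..<n} (\<lambda>_. density lborel std_normal_density)) (PiM {..<n} (\<lambda>_. borel))
       (\<lambda>z. \<lambda>i\<in>{..<n}. \<Sum>j<n. S i j * z j)"

definition risk :: "nat \<Rightarrow> (nat \<Rightarrow> real^'d) \<Rightarrow> (real^'d \<Rightarrow> real) \<Rightarrow> (nat \<Rightarrow> nat \<Rightarrow> real)
    \<Rightarrow> (nat \<Rightarrow> nat \<Rightarrow> real) \<Rightarrow> (real^'d \<Rightarrow> real) \<Rightarrow> real" where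
  "risk n X f0 S Q f =
     (\<integral>eps. (1 / real n) *
        (\<Sum>i<n. \<Sum>j<n. (f0 (X i) + eps i - f (X i)) * Q i j * (f0 (X j) + eps j - f (X j)))
      \<partial>gaussian_vec n S)"

definition nn_class :: "(real \<Rightarrow> real) \<Rightarrow> nat \<Rightarrow> real \<Rightarrow> real \<Rightarrow> (real^'d \<Rightarrow> real) set" where
  "nn_class \<sigma> r V M =
     {f. \<exists>(\<alpha> :: nat \<Rightarrow> real) (\<gamma> :: nat \<Rightarrow> real^'d) (\<gamma>0 :: nat \<Rightarrow> real).
           (\<Sum>j\<le>r. \<bar>\<alpha> j\<bar>) \<le> V \<and>
           (\<forall>j\<in>{1..r}. \<bar>\<gamma>0 j\<bar> + (\<Sum>i\<in>UNIV. \<bar>\<gamma> j $ i\<bar>) \<le> M) \<and>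
           f = (\<lambda>x. \<alpha> 0 + (\<Sum>j=1..r. \<alpha> j * \<sigma> (\<gamma> j \<bullet> x + \<gamma>0 j)))}"

end

theory Submission
  imports Defs
begin

text \<open>Write \<open>g\<close>, \<open>h\<close> for the vectors of values of \<open>f0 - pif0\<close>, \<open>f - pif0\<close> at the design
  points. The noise adds the same constant to every risk, so
  \<open>L_n(f) - L_n(pif0) = (h\<^sup>TQh - 2 g\<^sup>TQh) / n\<close>, which Young's inequality bounds below by
  \<open>(2/3 h\<^sup>TQh - 3 g\<^sup>TQg) / n\<close>.
  The form of \<open>Q\<close> lies between \<open>\<Lambda>low/\<Psi>high\<close> and \<open>\<Lambda>high/\<Psi>low\<close> times the squared norm:
  every \<open>v\<close> equals \<open>S w\<close> for \<open>w = S\<^sup>T x\<close> with \<open>\<Sigma> x = v\<close>, whence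
  \<open>v\<^sup>TQv = w\<^sup>T(S\<^sup>TQS)w\<close> and \<open>\<Psi>low |w|\<^sup>2 \<le> |v|\<^sup>2 \<le> \<Psi>high |w|\<^sup>2\<close>.
  As \<open>\<parallel>h\<parallel>_n > \<delta>/2\<close> while \<open>\<parallel>g\<parallel>_n\<close> is a small multiple of \<open>\<delta>\<close>, the term in \<open>h\<close> dominates.
  Eigenvalue bounds become bounds on quadratic forms by the Rayleigh principle, proved by
  minimising the form over the unit sphere.\<close>

section \<open>Quadratic forms on R^n\<close>

definition bilin :: "nat \<Rightarrow> (nat \<Rightarrow> nat \<Rightarrow> real) \<Rightarrow> (nat \<Rightarrow> real) \<Rightarrow> (nat \<Rightarrow> real) \<Rightarrow> real" where
  "bilin n B x y = (\<Sum>i<n. \<Sum>j<n. x i * B i j * y j)"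

definition dotp :: "nat \<Rightarrow> (nat \<Rightarrow> real) \<Rightarrow> (nat \<Rightarrow> real) \<Rightarrow> real" where
  "dotp n x y = (\<Sum>i<n. x i * y i)"

definition sqnorm :: "nat \<Rightarrow> (nat \<Rightarrow> real) \<Rightarrow> real" where
  "sqnorm n x = (\<Sum>i<n. (x i)\<^sup>2)"

definition mat_vec :: "nat \<Rightarrow> (nat \<Rightarrow> nat \<Rightarrow> real) \<Rightarrow> (nat \<Rightarrow> real) \<Rightarrow> nat \<Rightarrow> real" where
  "mat_vec n B x = (\<lambda>i. \<Sum>j<n. B i j * x j)"

lemma bilin_add_left: "bilin n B (\<lambda>i. x i + y i) z = bilin n B x z + bilin n B y z"
  unfolding bilin_def by (simp add: algebra_simps sum.distrib)

lemma bilin_add_right: "bilin n B x (\<lambda>i. y i + z i) = bilin n B x y + bilin n B x z"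
  unfolding bilin_def by (simp add: algebra_simps sum.distrib)

lemma bilin_diff_left: "bilin n B (\<lambda>i. x i - y i) z = bilin n B x z - bilin n B y z"
  unfolding bilin_def by (simp add: algebra_simps sum_subtractf)

lemma bilin_diff_right: "bilin n B x (\<lambda>i. y i - z i) = bilin n B x y - bilin n B x z"
  unfolding bilin_def by (simp add: algebra_simps sum_subtractf)

lemma bilin_scale_left: "bilin n B (\<lambda>i. c * x i) y = c * bilin n B x y"
  unfolding bilin_def by (simp add: algebra_simps sum_distrib_left)

lemma bilin_scale_right: "bilin n B x (\<lambda>i. c * y i) = c * bilin n B x y"
  unfolding bilin_def by (simp add: algebra_simps sum_distrib_left)

lemmas bilin_linear = bilin_add_left bilin_add_right bilin_diff_left bilin_diff_right
  bilin_scale_left bilin_scale_right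

lemma bilin_commute: "mat_symmetric n B \<Longrightarrow> bilin n B y x = bilin n B x y"
  unfolding bilin_def mat_symmetric_def by (subst sum.swap) (auto intro!: sum.cong)

lemma bilin_add_scaled:
  assumes "mat_symmetric n B"
  shows "bilin n B (\<lambda>i. x i + t * y i) (\<lambda>i. x i + t * y i)
    = bilin n B x x + 2 * t * bilin n B x y + t\<^sup>2 * bilin n B y y"
  using bilin_commute[OF assms, of x y] by (simp add: bilin_linear power2_eq_square algebra_simps)

lemma dotp_add_right: "dotp n x (\<lambda>i. y i + z i) = dotp n x y + dotp n x z"
  unfolding dotp_def by (simp add: algebra_simps sum.distrib)

lemma dotp_scale_right: "dotp n x (\<lambda>i. c * y i) = c * dotp n x y"
  unfolding dotp_def by (simp add: algebra_simps sum_distrib_left)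

lemma dotp_self: "dotp n x x = sqnorm n x"
  unfolding dotp_def sqnorm_def by (simp add: power2_eq_square)

lemma sqnorm_nonneg: "0 \<le> sqnorm n x"
  unfolding sqnorm_def by (simp add: sum_nonneg)

lemma sqnorm_eq_0_iff: "sqnorm n x = 0 \<longleftrightarrow> (\<forall>i<n. x i = 0)"
  unfolding sqnorm_def by (subst sum_nonneg_eq_0_iff) auto

lemma sqnorm_scale: "sqnorm n (\<lambda>i. c * x i) = c\<^sup>2 * sqnorm n x"
  unfolding sqnorm_def by (simp add: power_mult_distrib sum_distrib_left)

lemma coord_sq_le_sqnorm: "i < n \<Longrightarrow> (x i)\<^sup>2 \<le> sqnorm n x"
  unfolding sqnorm_def by (rule member_le_sum) auto

lemma sqnorm_add_scaled:
  "sqnorm n (\<lambda>i. x i + t * y i) = sqnorm n x + 2 * t * dotp n x y + t\<^sup>2 * sqnorm n y"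
  unfolding sqnorm_def dotp_def by (simp add: algebra_simps sum.distrib sum_distrib_left power2_eq_square)

lemma bilin_cong:
  "(\<And>i. i < n \<Longrightarrow> x i = x' i) \<Longrightarrow> (\<And>i. i < n \<Longrightarrow> y i = y' i) \<Longrightarrow> bilin n B x y = bilin n B x' y'"
  unfolding bilin_def by (intro sum.cong) auto

lemma sqnorm_cong: "(\<And>i. i < n \<Longrightarrow> x i = x' i) \<Longrightarrow> sqnorm n x = sqnorm n x'"
  unfolding sqnorm_def by (intro sum.cong) auto

lemma dotp_cong:
  "(\<And>i. i < n \<Longrightarrow> x i = x' i) \<Longrightarrow> (\<And>i. i < n \<Longrightarrow> y i = y' i) \<Longrightarrow> dotp n x y = dotp n x' y'"
  unfolding dotp_def by (intro sum.cong) auto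

lemma bilin_eq_dotp: "bilin n B x y = dotp n x (mat_vec n B y)"
  unfolding bilin_def dotp_def mat_vec_def sum_distrib_left by (simp add: mult_ac)

lemma bilin_eq_dotp_mat_vec: "mat_symmetric n B \<Longrightarrow> bilin n B x y = dotp n (mat_vec n B x) y"
  unfolding bilin_def dotp_def mat_vec_def mat_symmetric_def sum_distrib_right
  by (subst sum.swap) (auto intro!: sum.cong simp: mult_ac)

lemma dotp_mat_vec_transpose: "dotp n (mat_vec n B x) y = dotp n x (mat_vec n (\<lambda>i j. B j i) y)"
  unfolding dotp_def mat_vec_def sum_distrib_left sum_distrib_right
  by (subst sum.swap) (simp add: mult_ac)

lemma dotp_Young:
  assumes "0 < c" shows "2 * dotp n x y \<le> c * sqnorm n x + sqnorm n y / c"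
proof -
  have "0 \<le> sqnorm n (\<lambda>i. c * x i - y i)" by (rule sqnorm_nonneg)
  also have "\<dots> = c\<^sup>2 * sqnorm n x - 2 * c * dotp n x y + sqnorm n y"
    unfolding sqnorm_def dotp_def
    by (simp add: power2_diff power_mult_distrib sum_subtractf sum.distrib sum_distrib_left mult_ac)
  finally show ?thesis using assms by (simp add: field_simps power2_eq_square)
qed

lemma bilin_Young:
  assumes "mat_symmetric n B" "\<And>z. 0 \<le> bilin n B z z" "0 < c"
  shows "2 * bilin n B x y \<le> c * bilin n B x x + bilin n B y y / c"
proof -
  have "0 \<le> bilin n B (\<lambda>i. c * x i - y i) (\<lambda>i. c * x i - y i)" by (rule assms(2))
  also have "\<dots> = c\<^sup>2 * bilin n B x x - 2 * c * bilin n B x y + bilin n B y y"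
    using bilin_commute[OF assms(1), of x y] by (simp add: bilin_linear power2_eq_square algebra_simps)
  finally show ?thesis using assms(3) by (simp add: field_simps power2_eq_square)
qed

lemma bilin_nonneg_if_coercive:
  assumes "0 \<le> c" "\<And>v. c * sqnorm n v \<le> bilin n B v v"
  shows "0 \<le> bilin n B v v"
  using assms(2)[of v] mult_nonneg_nonneg[OF assms(1) sqnorm_nonneg[of n v]] by linarith

lemma linear_coeff_eq_0_if_quadratic_nonneg:
  fixes a b :: real
  assumes "\<And>t. 0 \<le> t * a + t\<^sup>2 * b"
  shows "a = 0"
proof (rule ccontr)
  assume "a \<noteq> 0"
  define d where "d = \<bar>b\<bar> + 1"
  have d: "0 < d" "b < d" unfolding d_def by auto
  have "0 \<le> d\<^sup>2 * ((- a / d) * a + (- a / d)\<^sup>2 * b)"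
    using assms[of "- a / d"] by simp
  also have "\<dots> = a\<^sup>2 * (b - d)"
    using d by (simp add: field_simps power2_eq_square)
  also have "\<dots> < 0"
    using \<open>a \<noteq> 0\<close> d by (simp add: mult_pos_neg)
  finally show False by simp
qed

section \<open>Gaussian noise and the risk\<close>

abbreviation std_normal :: "real measure" where
  "std_normal \<equiv> density lborel std_normal_density"

abbreviation std_normal_vec :: "nat \<Rightarrow> (nat \<Rightarrow> real) measure" where
  "std_normal_vec n \<equiv> PiM {..<n} (\<lambda>_. std_normal)"

lemma prob_space_std_normal: "prob_space std_normal"
  by (rule prob_space_normal_density) simp

lemma std_normal_moments:
  shows "integrable std_normal (\<lambda>x. x)" "integrable std_normal (\<lambda>x. x\<^sup>2)"
    and "(\<integral>x. x \<partial>std_normal) = 0"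
proof -
  have meas: "std_normal_density \<in> borel_measurable lborel" by measurable
  have nonneg: "AE x in lborel. 0 \<le> std_normal_density x" by simp
  show "integrable std_normal (\<lambda>x. x)"
    using integrable_std_normal_moment[of 1] by (subst integrable_density[OF _ meas nonneg]) auto
  show "integrable std_normal (\<lambda>x. x\<^sup>2)"
    using integrable_std_normal_moment[of 2] by (subst integrable_density[OF _ meas nonneg]) auto
  show "(\<integral>x. x \<partial>std_normal) = 0"
    using integral_std_normal_moment_odd[of 0] by (subst integral_density[OF _ meas nonneg]) auto
qed

lemma std_normal_vec_component:
  assumes "j < n"
  shows "integrable (std_normal_vec n) (\<lambda>z. z j)" "integrable (std_normal_vec n) (\<lambda>z. (z j)\<^sup>2)"
    and "(\<integral>z. z j \<partial>std_normal_vec n) = 0"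
proof -
  have j: "j \<in> {..<n}" using assms by simp
  have distr: "distr (std_normal_vec n) std_normal (\<lambda>z. z j) = std_normal"
    using distr_PiM_component[OF prob_space_std_normal j] .
  have meas: "(\<lambda>z. z j) \<in> std_normal_vec n \<rightarrow>\<^sub>M std_normal"
    using measurable_component_singleton[OF j] .
  have ident: "(\<lambda>x::real. x) \<in> borel_measurable std_normal" and sq: "(\<lambda>x::real. x\<^sup>2) \<in> borel_measurable std_normal"
    by simp_all
  show "integrable (std_normal_vec n) (\<lambda>z. z j)"
    using std_normal_moments(1) integrable_distr_eq[OF meas ident] unfolding distr by simp
  show "integrable (std_normal_vec n) (\<lambda>z. (z j)\<^sup>2)"
    using std_normal_moments(2) integrable_distr_eq[OF meas sq] unfolding distr by simp
  show "(\<integral>z. z j \<partial>std_normal_vec n) = 0"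
    using std_normal_moments(3) integral_distr[OF meas ident] unfolding distr by simp
qed

lemma borel_measurable_std_normal_vec_component:
  assumes "j < n" shows "(\<lambda>z. z j) \<in> borel_measurable (std_normal_vec n)"
proof -
  have "(\<lambda>z. z j) \<in> std_normal_vec n \<rightarrow>\<^sub>M std_normal"
    using assms by (intro measurable_component_singleton) auto
  then show ?thesis by (simp cong: measurable_cong_sets)
qed

lemma integrable_std_normal_vec_product:
  assumes "j < n" "k < n"
  shows "integrable (std_normal_vec n) (\<lambda>z. z j * z k)"
proof (rule Bochner_Integration.integrable_bound)
  show "integrable (std_normal_vec n) (\<lambda>z. (z j)\<^sup>2 + (z k)\<^sup>2)"
    using std_normal_vec_component assms by auto
  show "(\<lambda>z. z j * z k) \<in> borel_measurable (std_normal_vec n)"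
    using assms by (intro borel_measurable_times borel_measurable_std_normal_vec_component)
  show "AE z in std_normal_vec n. norm (z j * z k) \<le> norm ((z j)\<^sup>2 + (z k)\<^sup>2)"
  proof (intro AE_I2)
    fix z :: "nat \<Rightarrow> real"
    have "2 * \<bar>z j * z k\<bar> \<le> (z j)\<^sup>2 + (z k)\<^sup>2"
      using sum_squares_bound[of "\<bar>z j\<bar>" "\<bar>z k\<bar>"] by (simp add: abs_mult power2_eq_square)
    then show "norm (z j * z k) \<le> norm ((z j)\<^sup>2 + (z k)\<^sup>2)" by simp
  qed
qed

lemma prob_space_gaussian_vec: "prob_space (gaussian_vec n S)"
  unfolding gaussian_vec_def
  by (intro prob_space.prob_space_distr prob_space_PiM prob_space_std_normal measurable_restrict
      borel_measurable_sum borel_measurable_times borel_measurable_const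
      borel_measurable_std_normal_vec_component) auto

lemma gaussian_vec_moments:
  assumes "i < n" "j < n"
  shows "integrable (gaussian_vec n S) (\<lambda>e. e i)" "(\<integral>e. e i \<partial>gaussian_vec n S) = 0"
    and "integrable (gaussian_vec n S) (\<lambda>e. e i * e j)"
proof -
  define T where "T = (\<lambda>z. \<lambda>i\<in>{..<n}. \<Sum>j<n. S i j * (z::nat\<Rightarrow>real) j)"
  have T: "T \<in> std_normal_vec n \<rightarrow>\<^sub>M PiM {..<n} (\<lambda>_. borel)"
    unfolding T_def
    by (intro measurable_restrict borel_measurable_sum borel_measurable_times borel_measurable_const
        borel_measurable_std_normal_vec_component) auto
  have G: "gaussian_vec n S = distr (std_normal_vec n) (PiM {..<n} (\<lambda>_. borel)) T"
    unfolding gaussian_vec_def T_def ..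
  have comp: "(\<lambda>e. e k) \<in> borel_measurable (PiM {..<n} (\<lambda>_. (borel::real measure)))" if "k < n" for k
    using that by (intro measurable_component_singleton) auto
  have T_comp: "T z k = (\<Sum>j<n. S k j * z j)" if "k < n" for k z
    using that unfolding T_def by simp
  show "integrable (gaussian_vec n S) (\<lambda>e. e i)"
    unfolding G using assms
    by (subst integrable_distr_eq[OF T comp])
      (auto simp: T_comp std_normal_vec_component)
  show "(\<integral>e. e i \<partial>gaussian_vec n S) = 0"
    unfolding G using assms
    by (subst integral_distr[OF T comp])
      (auto simp: T_comp std_normal_vec_component Bochner_Integration.integral_sum)
  have "T z i * T z j = (\<Sum>a<n. \<Sum>b<n. (S j a * S i b) * (z b * z a))" for z
    using assms by (simp add: T_comp sum_distrib_left sum_distrib_right mult_ac)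
  moreover have "integrable (std_normal_vec n) (\<lambda>z. \<Sum>a<n. \<Sum>b<n. (S j a * S i b) * (z b * z a))"
    by (intro Bochner_Integration.integrable_sum integrable_mult_right integrable_std_normal_vec_product) auto
  ultimately show "integrable (gaussian_vec n S) (\<lambda>e. e i * e j)"
    unfolding G using assms by (subst integrable_distr_eq[OF T borel_measurable_times[OF comp comp]]) auto
qed

lemma integral_double_sum:
  fixes f :: "nat \<Rightarrow> nat \<Rightarrow> 'a \<Rightarrow> real"
  assumes "\<And>i j. i < n \<Longrightarrow> j < n \<Longrightarrow> integrable M (f i j)"
  shows "integrable M (\<lambda>x. \<Sum>i<n. \<Sum>j<n. f i j x)"
    and "(\<integral>x. (\<Sum>i<n. \<Sum>j<n. f i j x) \<partial>M) = (\<Sum>i<n. \<Sum>j<n. \<integral>x. f i j x \<partial>M)"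
proof -
  show "integrable M (\<lambda>x. \<Sum>i<n. \<Sum>j<n. f i j x)"
    using assms by (intro Bochner_Integration.integrable_sum) auto
  have "(\<integral>x. (\<Sum>i<n. \<Sum>j<n. f i j x) \<partial>M) = (\<Sum>i<n. \<integral>x. (\<Sum>j<n. f i j x) \<partial>M)"
    using assms by (intro Bochner_Integration.integral_sum Bochner_Integration.integrable_sum) auto
  also have "\<dots> = (\<Sum>i<n. \<Sum>j<n. \<integral>x. f i j x \<partial>M)"
    using assms by (intro sum.cong refl Bochner_Integration.integral_sum) auto
  finally show "(\<integral>x. (\<Sum>i<n. \<Sum>j<n. f i j x) \<partial>M) = (\<Sum>i<n. \<Sum>j<n. \<integral>x. f i j x \<partial>M)" .
qed

lemma gaussian_vec_bilin_moments:
  shows "integrable (gaussian_vec n S) (\<lambda>e. bilin n B a e)" "(\<integral>e. bilin n B a e \<partial>gaussian_vec n S) = 0"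
    and "integrable (gaussian_vec n S) (\<lambda>e. bilin n B e a)" "(\<integral>e. bilin n B e a \<partial>gaussian_vec n S) = 0"
    and "integrable (gaussian_vec n S) (\<lambda>e. bilin n B e e)"
proof -
  let ?G = "gaussian_vec n S"
  have left: "integrable ?G (\<lambda>e. a i * B i j * e j)" "(\<integral>e. a i * B i j * e j \<partial>?G) = 0"
    and right: "integrable ?G (\<lambda>e. e i * B i j * a j)" "(\<integral>e. e i * B i j * a j \<partial>?G) = 0"
    if "i < n" "j < n" for i j
    using gaussian_vec_moments[OF that] gaussian_vec_moments[OF that(2,1)] by simp_all
  have both: "integrable ?G (\<lambda>e. e i * B i j * e j)" if "i < n" "j < n" for i j
  proof -
    have "(\<lambda>e. e i * B i j * e j) = (\<lambda>e. B i j * (e i * e j))" by (simp add: fun_eq_iff mult_ac)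
    then show ?thesis using gaussian_vec_moments(3)[OF that] by simp
  qed
  have sum_a: "integrable ?G (\<lambda>e. \<Sum>i<n. \<Sum>j<n. a i * B i j * e j)"
      "(\<integral>e. (\<Sum>i<n. \<Sum>j<n. a i * B i j * e j) \<partial>?G) = (\<Sum>i<n. \<Sum>j<n. \<integral>e. a i * B i j * e j \<partial>?G)"
    and sum_b: "integrable ?G (\<lambda>e. \<Sum>i<n. \<Sum>j<n. e i * B i j * a j)"
      "(\<integral>e. (\<Sum>i<n. \<Sum>j<n. e i * B i j * a j) \<partial>?G) = (\<Sum>i<n. \<Sum>j<n. \<integral>e. e i * B i j * a j \<partial>?G)"
    by (intro integral_double_sum left(1) right(1); assumption)+
  show "integrable ?G (\<lambda>e. bilin n B a e)" "integrable ?G (\<lambda>e. bilin n B e a)"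
    using sum_a(1) sum_b(1) unfolding bilin_def .
  show "(\<integral>e. bilin n B a e \<partial>?G) = 0"
    unfolding bilin_def sum_a(2) by (intro sum.neutral ballI left(2)) auto
  show "(\<integral>e. bilin n B e a \<partial>?G) = 0"
    unfolding bilin_def sum_b(2) by (intro sum.neutral ballI right(2)) auto
  show "integrable ?G (\<lambda>e. bilin n B e e)"
    using integral_double_sum(1)[where f="\<lambda>i j e. e i * B i j * e j", OF both]
    unfolding bilin_def by simp
qed

lemma risk_eq_bias_plus_noise:
  "risk n X f0 S Q f = bilin n Q (\<lambda>i. f0 (X i) - f (X i)) (\<lambda>i. f0 (X i) - f (X i)) / n
     + (\<integral>e. bilin n Q e e / n \<partial>gaussian_vec n S)"
proof -
  let ?G = "gaussian_vec n S"
  interpret G: prob_space ?G by (rule prob_space_gaussian_vec)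
  define r where "r = (\<lambda>i. f0 (X i) - f (X i))"
  define cross where "cross = (\<lambda>e. bilin n Q r e / n + bilin n Q e r / n)"
  have cross: "integrable ?G cross" "integral\<^sup>L ?G cross = 0"
    unfolding cross_def using gaussian_vec_bilin_moments(1-4)[of n S Q r] by simp_all
  have noise: "integrable ?G (\<lambda>e. bilin n Q e e / n)"
    using gaussian_vec_bilin_moments(5)[of n S Q] by simp
  have "(1 / real n) * (\<Sum>i<n. \<Sum>j<n. (f0 (X i) + e i - f (X i)) * Q i j * (f0 (X j) + e j - f (X j)))
      = (bilin n Q r r / n + cross e) + bilin n Q e e / n" for e
  proof -
    have "(\<Sum>i<n. \<Sum>j<n. (f0 (X i) + e i - f (X i)) * Q i j * (f0 (X j) + e j - f (X j)))
        = bilin n Q (\<lambda>i. r i + e i) (\<lambda>i. r i + e i)"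
      unfolding bilin_def r_def by (simp add: diff_add_eq)
    then show ?thesis
      unfolding bilin_add_left bilin_add_right cross_def by (simp add: add_divide_distrib)
  qed
  then have "risk n X f0 S Q f = (\<integral>e. (bilin n Q r r / n + cross e) + bilin n Q e e / n \<partial>?G)"
    unfolding risk_def by simp
  also have "\<dots> = (\<integral>e. bilin n Q r r / n + cross e \<partial>?G) + (\<integral>e. bilin n Q e e / n \<partial>?G)"
    using cross noise by (intro Bochner_Integration.integral_add) auto
  also have "(\<integral>e. bilin n Q r r / n + cross e \<partial>?G) = bilin n Q r r / n"
    using cross by (subst Bochner_Integration.integral_add) (auto simp: G.prob_space)
  finally show ?thesis unfolding r_def .
qed

lemma risk_diff_eq:
  assumes "mat_symmetric n Q"
  shows "risk n X f0 S Q f - risk n X f0 S Q p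
    = (bilin n Q (\<lambda>i. f (X i) - p (X i)) (\<lambda>i. f (X i) - p (X i))
       - 2 * bilin n Q (\<lambda>i. f0 (X i) - p (X i)) (\<lambda>i. f (X i) - p (X i))) / n"
proof -
  define g where "g = (\<lambda>i. f0 (X i) - p (X i))"
  define h where "h = (\<lambda>i. f (X i) - p (X i))"
  have "(\<lambda>i. f0 (X i) - f (X i)) = (\<lambda>i. g i - h i)"
    unfolding g_def h_def by simp
  then show ?thesis
    unfolding risk_eq_bias_plus_noise g_def[symmetric] h_def[symmetric]
    using bilin_commute[OF assms, of g h] by (simp add: bilin_linear diff_divide_distrib add_divide_distrib)
qed

lemma emp_norm_nonneg: "0 \<le> emp_norm n X f"
  unfolding emp_norm_def by (simp add: sum_nonneg)

lemma emp_norm_sq: "(emp_norm n X f)\<^sup>2 = sqnorm n (\<lambda>i. f (X i)) / n"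
  unfolding emp_norm_def sqnorm_def by (simp add: sum_nonneg)

section \<open>Rayleigh quotients of symmetric matrices\<close>

lemma continuous_map_sqnorm: "continuous_map (powertop_real {..<n}) euclideanreal (sqnorm n)"
  unfolding sqnorm_def power2_eq_square
  by (intro continuous_map_sum continuous_map_real_mult continuous_map_product_projection) auto

lemma continuous_map_bilin_diag: "continuous_map (powertop_real {..<n}) euclideanreal (\<lambda>x. bilin n B x x)"
  unfolding bilin_def
  by (intro continuous_map_sum continuous_map_real_mult continuous_map_const[THEN iffD2]
      continuous_map_product_projection) auto

lemma attains_min_on_sqnorm_preimage:
  fixes F :: "(nat \<Rightarrow> real) \<Rightarrow> real"
  assumes F: "continuous_map (powertop_real {..<n}) euclideanreal F"
    and F_restrict: "\<And>x. F (restrict x {..<n}) = F x"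
    and C: "closed C" "C \<subseteq> {..R}" and x0: "sqnorm n x0 \<in> C"
  obtains u where "sqnorm n u \<in> C" "\<And>x. sqnorm n x \<in> C \<Longrightarrow> F u \<le> F x"
proof -
  \<comment> \<open>Points of \<open>powertop_real {..<n}\<close> are extensional functions; \<open>F_restrict\<close> transfers
    the minimum from them to all of \<open>nat \<Rightarrow> real\<close>.\<close>
  define K where "K = {x \<in> topspace (powertop_real {..<n}). sqnorm n x \<in> C} \<inter> PiE {..<n} (\<lambda>_. {-sqrt R..sqrt R})"
  have "closedin (powertop_real {..<n}) {x \<in> topspace (powertop_real {..<n}). sqnorm n x \<in> C}"
    by (rule closedin_continuous_map_preimage[OF continuous_map_sqnorm]) (use C in simp)
  moreover have "compactin (powertop_real {..<n}) (PiE {..<n} (\<lambda>_. {-sqrt R..sqrt R}))"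
    by (subst compactin_PiE) auto
  ultimately have "compactin (powertop_real {..<n}) K"
    unfolding K_def by (rule closed_Int_compactin)
  have sqnorm_restrict: "sqnorm n (restrict x {..<n}) = sqnorm n x" for x
    by (rule sqnorm_cong) simp
  have restrict_in_K: "restrict x {..<n} \<in> K" if x: "sqnorm n x \<in> C" for x
  proof -
    have "- sqrt R \<le> x i \<and> x i \<le> sqrt R" if "i < n" for i
    proof -
      have "\<bar>x i\<bar> \<le> sqrt R"
      proof (rule real_le_rsqrt)
        show "\<bar>x i\<bar>\<^sup>2 \<le> R"
          using coord_sq_le_sqnorm[OF that, of x] x C(2) by force
      qed
      then show ?thesis by (simp add: abs_le_iff)
    qed
    then show ?thesis
      unfolding K_def using x sqnorm_restrict[of x] by (simp add: PiE_iff)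
  qed
  have "compact (F ` K)"
    using image_compactin[OF \<open>compactin _ K\<close> F] by simp
  moreover have "F ` K \<noteq> {}" using restrict_in_K[OF x0] by auto
  ultimately obtain u where u: "u \<in> K" "\<And>y. y \<in> K \<Longrightarrow> F u \<le> F y"
    using compact_attains_inf[of "F ` K"] by auto
  show thesis
  proof
    show "sqnorm n u \<in> C" using u(1) by (simp add: K_def)
    show "F u \<le> F x" if "sqnorm n x \<in> C" for x
      using u(2)[OF restrict_in_K[OF that]] by (simp add: F_restrict)
  qed
qed

lemma eigenvector_if_attains_min_rayleigh:
  assumes sym: "mat_symmetric n B" and lower: "\<And>x. \<mu> * sqnorm n x \<le> bilin n B x x"
    and attained: "bilin n B u u = \<mu> * sqnorm n u" and "i < n"
  shows "mat_vec n B u i = \<mu> * u i"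
proof -
  define w where "w = (\<lambda>i. mat_vec n B u i - \<mu> * u i)"
  have "0 \<le> t * (2 * sqnorm n w) + t\<^sup>2 * (bilin n B w w - \<mu> * sqnorm n w)" for t
  proof -
    have "dotp n (mat_vec n B u) w - \<mu> * dotp n u w = sqnorm n w"
      unfolding w_def dotp_def sqnorm_def
      by (simp add: algebra_simps power2_eq_square sum_subtractf sum_distrib_left sum.distrib)
    moreover have "\<mu> * sqnorm n (\<lambda>i. u i + t * w i) \<le> bilin n B (\<lambda>i. u i + t * w i) (\<lambda>i. u i + t * w i)"
      by (rule lower)
    ultimately show ?thesis
      unfolding sqnorm_add_scaled bilin_add_scaled[OF sym] bilin_eq_dotp_mat_vec[OF sym, of u w] attained
      by (simp add: algebra_simps)
  qed
  then have "sqnorm n w = 0"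
    using linear_coeff_eq_0_if_quadratic_nonneg by fastforce
  then show ?thesis
    using \<open>i < n\<close> by (simp add: sqnorm_eq_0_iff w_def)
qed

lemma symmetric_matrix_min_eigenvalue:
  assumes "0 < n" and sym: "mat_symmetric n B"
  obtains \<mu> where "mat_eigenvalue n B \<mu>" "\<And>x. \<mu> * sqnorm n x \<le> bilin n B x x"
proof -
  have restrict: "bilin n B (restrict x {..<n}) (restrict x {..<n}) = bilin n B x x" for x
    by (rule bilin_cong) simp_all
  have "sqnorm n (\<lambda>i. if i = 0 then 1 else 0) = 1"
    using assms(1) unfolding sqnorm_def
    by (subst sum.cong[OF refl, of _ _ "\<lambda>i. if i = 0 then 1 else 0"]) auto
  then obtain u where u: "sqnorm n u = 1" and u_min: "\<And>x. sqnorm n x = 1 \<Longrightarrow> bilin n B u u \<le> bilin n B x x"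
    using attains_min_on_sqnorm_preimage[where F="\<lambda>x. bilin n B x x", OF continuous_map_bilin_diag restrict,
        of "{1}" 1] by auto
  define \<mu> where "\<mu> = bilin n B u u"
  have lower: "\<mu> * sqnorm n x \<le> bilin n B x x" for x
  proof (cases "sqnorm n x = 0")
    case True
    then have "bilin n B x x = bilin n B (\<lambda>_. 0) (\<lambda>_. 0)"
      by (intro bilin_cong) (simp_all add: sqnorm_eq_0_iff)
    then show ?thesis using True by (simp add: bilin_def)
  next
    case False
    define c where "c = 1 / sqrt (sqnorm n x)"
    have c2: "c\<^sup>2 * sqnorm n x = 1"
      using False sqnorm_nonneg[of n x] by (simp add: c_def power_divide)
    have "\<mu> \<le> c\<^sup>2 * bilin n B x x"
      using u_min[of "\<lambda>i. c * x i"] c2 by (simp add: \<mu>_def sqnorm_scale bilin_linear power2_eq_square)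
    then have "\<mu> * sqnorm n x \<le> c\<^sup>2 * bilin n B x x * sqnorm n x"
      using sqnorm_nonneg[of n x] by (rule mult_right_mono)
    also have "\<dots> = (c\<^sup>2 * sqnorm n x) * bilin n B x x"
      by (simp only: mult_ac)
    finally show ?thesis using c2 by simp
  qed
  have "\<forall>i<n. mat_vec n B u i = \<mu> * u i"
    using eigenvector_if_attains_min_rayleigh[OF sym lower] u by (simp add: \<mu>_def)
  moreover have "\<exists>i<n. u i \<noteq> 0"
    using u sqnorm_eq_0_iff[of n u] by auto
  ultimately have "mat_eigenvalue n B \<mu>"
    unfolding mat_eigenvalue_def mat_vec_def by blast
  with lower show thesis using that by blast
qed

lemma bilin_ge_if_eigenvalues_ge:
  assumes "0 < n" "mat_symmetric n B" "\<And>\<mu>. mat_eigenvalue n B \<mu> \<Longrightarrow> c \<le> \<mu>"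
  shows "c * sqnorm n x \<le> bilin n B x x"
proof -
  obtain \<mu> where "mat_eigenvalue n B \<mu>" "\<mu> * sqnorm n x \<le> bilin n B x x"
    using symmetric_matrix_min_eigenvalue[OF assms(1,2)] by metis
  then show ?thesis
    using assms(3) sqnorm_nonneg[of n x] by (meson mult_right_mono order_trans)
qed

lemma bilin_le_if_eigenvalues_le:
  assumes "0 < n" "mat_symmetric n B" "\<And>\<mu>. mat_eigenvalue n B \<mu> \<Longrightarrow> \<mu> \<le> c"
  shows "bilin n B x x \<le> c * sqnorm n x"
proof -
  have neg_eig: "mat_eigenvalue n B (- \<mu>)" if neg: "mat_eigenvalue n (\<lambda>i j. - B i j) \<mu>" for \<mu>
  proof -
    obtain v where "\<exists>i<n. v i \<noteq> 0" "\<forall>i<n. (\<Sum>j<n. - B i j * v j) = \<mu> * v i"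
      using neg unfolding mat_eigenvalue_def by blast
    then show ?thesis
      unfolding mat_eigenvalue_def by (intro exI[of _ v]) (auto simp: sum_negf)
  qed
  then have "- c \<le> \<mu>" if "mat_eigenvalue n (\<lambda>i j. - B i j) \<mu>" for \<mu>
    using assms(3)[OF neg_eig[OF that]] by simp
  then have "- c * sqnorm n x \<le> bilin n (\<lambda>i j. - B i j) x x"
    using assms(1,2) by (intro bilin_ge_if_eigenvalues_ge) (auto simp: mat_symmetric_def)
  then show ?thesis
    unfolding bilin_def by (simp add: sum_negf)
qed

lemma coercive_quadratic_attains_min:
  assumes "0 < p" and coercive: "\<And>z. p * sqnorm n z \<le> bilin n B z z"
  obtains u where "\<And>x. bilin n B u u - 2 * dotp n v u \<le> bilin n B x x - 2 * dotp n v x"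
proof -
  define F where "F = (\<lambda>x. bilin n B x x - 2 * dotp n v x)"
  define R where "R = 4 * sqnorm n v / p\<^sup>2"
  have F_pos: "0 < F x" if "R < sqnorm n x" for x
  proof -
    have "2 * dotp n v x \<le> (2 / p) * sqnorm n v + sqnorm n x / (2 / p)"
      using dotp_Young[of "2 / p" n v x] \<open>0 < p\<close> by simp
    moreover have "p / 2 * (sqnorm n x - R) = p * sqnorm n x - ((2 / p) * sqnorm n v + sqnorm n x / (2 / p))"
      using \<open>0 < p\<close> unfolding R_def by (simp add: field_simps power2_eq_square)
    moreover have "0 < p / 2 * (sqnorm n x - R)"
      using that \<open>0 < p\<close> by simp
    ultimately show ?thesis
      using coercive[of x] unfolding F_def by linarith
  qed
  have F_cont: "continuous_map (powertop_real {..<n}) euclideanreal F"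
    unfolding F_def dotp_def
    by (intro continuous_map_diff continuous_map_bilin_diag continuous_map_real_mult
        continuous_map_const[THEN iffD2] continuous_map_sum continuous_map_product_projection) auto
  have F_restrict: "F (restrict x {..<n}) = F x" for x
  proof -
    have "bilin n B (restrict x {..<n}) (restrict x {..<n}) = bilin n B x x"
      "dotp n v (restrict x {..<n}) = dotp n v x"
      by (intro bilin_cong dotp_cong; simp)+
    then show ?thesis unfolding F_def by simp
  qed
  have zero: "sqnorm n (\<lambda>_. 0) = 0" "F (\<lambda>_. 0) = 0"
    by (simp_all add: F_def sqnorm_def bilin_def dotp_def)
  moreover have "0 \<le> R"
    unfolding R_def using sqnorm_nonneg[of n v] by simp
  ultimately obtain u where u_min: "\<And>x. sqnorm n x \<le> R \<Longrightarrow> F u \<le> F x"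
    using attains_min_on_sqnorm_preimage[where F=F, OF F_cont F_restrict, of "{..R}" R "\<lambda>_. 0"] by auto
  have "F u \<le> F x" for x
  proof (cases "sqnorm n x \<le> R")
    case False
    then show ?thesis
      using F_pos[of x] u_min[of "\<lambda>_. 0"] zero \<open>0 \<le> R\<close> by simp
  qed (rule u_min)
  then show thesis
    using that unfolding F_def by blast
qed

lemma minimiser_solves_linear_system:
  assumes sym: "mat_symmetric n B"
    and u_min: "\<And>x. bilin n B u u - 2 * dotp n v u \<le> bilin n B x x - 2 * dotp n v x"
    and "i < n"
  shows "mat_vec n B u i = v i"
proof -
  define w where "w = (\<lambda>i. mat_vec n B u i - v i)"
  have "0 \<le> t * (2 * sqnorm n w) + t\<^sup>2 * bilin n B w w" for t
  proof -
    have "dotp n (mat_vec n B u) w - dotp n v w = sqnorm n w"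
      unfolding w_def dotp_def sqnorm_def
      by (simp add: algebra_simps power2_eq_square sum_subtractf sum.distrib sum_distrib_left)
    moreover have "bilin n B u u - 2 * dotp n v u
        \<le> bilin n B (\<lambda>i. u i + t * w i) (\<lambda>i. u i + t * w i) - 2 * dotp n v (\<lambda>i. u i + t * w i)"
      by (rule u_min)
    ultimately show ?thesis
      unfolding bilin_add_scaled[OF sym] bilin_eq_dotp_mat_vec[OF sym, of u w]
      by (simp add: dotp_add_right dotp_scale_right algebra_simps)
  qed
  then have "sqnorm n w = 0"
    using linear_coeff_eq_0_if_quadratic_nonneg by fastforce
  then show ?thesis
    using \<open>i < n\<close> by (simp add: sqnorm_eq_0_iff w_def)
qed

lemma coercive_symmetric_matrix_surj:
  assumes "mat_symmetric n B" "0 < p" "\<And>z. p * sqnorm n z \<le> bilin n B z z"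
  obtains x where "\<And>i. i < n \<Longrightarrow> mat_vec n B x i = v i"
  using coercive_quadratic_attains_min[OF assms(2,3)] minimiser_solves_linear_system[OF assms(1)] by metis

section \<open>Pinching the quadratic form of Q\<close>

lemma mat_vec_sandwich:
  "mat_vec n (mat_sandwich n S Q) w = mat_vec n (\<lambda>i j. S j i) (mat_vec n Q (mat_vec n S w))"
proof
  fix i
  have "mat_vec n (mat_sandwich n S Q) w i = (\<Sum>j<n. \<Sum>k<n. \<Sum>l<n. S k i * Q k l * S l j * w j)"
    unfolding mat_vec_def mat_sandwich_def sum_distrib_right ..
  also have "\<dots> = (\<Sum>k<n. \<Sum>l<n. \<Sum>j<n. S k i * Q k l * S l j * w j)"
    by (subst sum.swap) (rule sum.cong[OF refl], rule sum.swap)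
  also have "\<dots> = mat_vec n (\<lambda>i j. S j i) (mat_vec n Q (mat_vec n S w)) i"
    unfolding mat_vec_def sum_distrib_left by (simp add: mult_ac)
  finally show "mat_vec n (mat_sandwich n S Q) w i = mat_vec n (\<lambda>i j. S j i) (mat_vec n Q (mat_vec n S w)) i" .
qed

lemma bilin_mat_sandwich:
  "bilin n (mat_sandwich n S Q) w w = bilin n Q (mat_vec n S w) (mat_vec n S w)"
  unfolding bilin_eq_dotp mat_vec_sandwich dotp_mat_vec_transpose[of n S, symmetric] ..

lemma mat_symmetric_sandwich:
  assumes "mat_symmetric n Q" shows "mat_symmetric n (mat_sandwich n S Q)"
  unfolding mat_symmetric_def
proof (intro allI impI)
  fix i j assume "i < n" "j < n"
  have "mat_sandwich n S Q i j = (\<Sum>l<n. \<Sum>k<n. S k i * Q k l * S l j)"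
    unfolding mat_sandwich_def by (rule sum.swap)
  also have "\<dots> = mat_sandwich n S Q j i"
    unfolding mat_sandwich_def using assms by (intro sum.cong refl) (simp add: mat_symmetric_def mult_ac)
  finally show "mat_sandwich n S Q i j = mat_sandwich n S Q j i" .
qed

lemma mat_symmetric_gram:
  "\<forall>i<n. \<forall>j<n. Sg i j = (\<Sum>k<n. S i k * S j k) \<Longrightarrow> mat_symmetric n Sg"
  by (simp add: mat_symmetric_def mult.commute)

lemma
  assumes "\<forall>i<n. \<forall>j<n. Sg i j = (\<Sum>k<n. S i k * S j k)"
  shows mat_vec_gram: "i < n \<Longrightarrow> mat_vec n S (mat_vec n (\<lambda>i j. S j i) x) i = mat_vec n Sg x i"
    and bilin_gram: "bilin n Sg x x = sqnorm n (mat_vec n (\<lambda>i j. S j i) x)"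
proof -
  show gram: "mat_vec n S (mat_vec n (\<lambda>i j. S j i) x) i = mat_vec n Sg x i" if "i < n" for i
  proof -
    have "mat_vec n S (mat_vec n (\<lambda>i j. S j i) x) i = (\<Sum>j<n. \<Sum>k<n. S i k * S j k * x j)"
      unfolding mat_vec_def sum_distrib_left by (subst sum.swap) (simp add: mult_ac)
    also have "\<dots> = mat_vec n Sg x i"
      unfolding mat_vec_def using assms that by (simp add: sum_distrib_right)
    finally show ?thesis .
  qed
  have "bilin n Sg x x = dotp n x (mat_vec n S (mat_vec n (\<lambda>i j. S j i) x))"
    unfolding bilin_eq_dotp using gram by (intro dotp_cong) simp_all
  also have "\<dots> = sqnorm n (mat_vec n (\<lambda>i j. S j i) x)"
    by (simp add: dotp_mat_vec_transpose[of n "\<lambda>i j. S j i" x, symmetric] dotp_self)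
  finally show "bilin n Sg x x = sqnorm n (mat_vec n (\<lambda>i j. S j i) x)" .
qed

lemma gram_preimage_sqnorm_bounds:
  assumes gram: "\<forall>i<n. \<forall>j<n. Sg i j = (\<Sum>k<n. S i k * S j k)"
    and \<Psi>: "0 < \<Psi>low" "\<Psi>low \<le> \<Psi>high"
    and Sg_lower: "\<And>x. \<Psi>low * sqnorm n x \<le> bilin n Sg x x"
    and Sg_upper: "\<And>x. bilin n Sg x x \<le> \<Psi>high * sqnorm n x"
    and x: "\<And>i. i < n \<Longrightarrow> mat_vec n Sg x i = v i"
  shows "sqnorm n v / \<Psi>high \<le> sqnorm n (mat_vec n (\<lambda>i j. S j i) x)"
    and "sqnorm n (mat_vec n (\<lambda>i j. S j i) x) \<le> sqnorm n v / \<Psi>low"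
proof -
  note sym = mat_symmetric_gram[OF gram]
  define a where "a = sqnorm n (mat_vec n (\<lambda>i j. S j i) x)"
  have a: "a = bilin n Sg x x" "a = dotp n v x"
    unfolding a_def bilin_gram[OF gram, symmetric] bilin_eq_dotp_mat_vec[OF sym]
    using x by (auto intro: dotp_cong)
  have "2 * a \<le> sqnorm n v / \<Psi>low + \<Psi>low * sqnorm n x"
    using dotp_Young[of "1 / \<Psi>low" n v x] \<Psi>(1) a(2) by (simp add: mult.commute)
  then show "a \<le> sqnorm n v / \<Psi>low"
    using Sg_lower[of x] a(1) by linarith
  have "sqnorm n v = bilin n Sg x v"
    unfolding bilin_eq_dotp_mat_vec[OF sym] dotp_self[symmetric] using x by (auto intro: dotp_cong)
  moreover have "2 * bilin n Sg x v \<le> \<Psi>high * bilin n Sg x x + bilin n Sg v v / \<Psi>high"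
    using bilin_Young[OF sym bilin_nonneg_if_coercive[OF _ Sg_lower]] \<Psi> by simp
  moreover have "bilin n Sg v v / \<Psi>high \<le> sqnorm n v"
    using Sg_upper[of v] \<Psi> by (simp add: divide_le_eq mult.commute)
  ultimately have "sqnorm n v \<le> \<Psi>high * a"
    unfolding a(1) by linarith
  then show "sqnorm n v / \<Psi>high \<le> a"
    using \<Psi> by (simp add: divide_le_eq mult.commute)
qed

lemma bilin_bounds_from_sandwich:
  assumes gram: "\<forall>i<n. \<forall>j<n. Sg i j = (\<Sum>k<n. S i k * S j k)"
    and \<Psi>: "0 < \<Psi>low" "\<Psi>low \<le> \<Psi>high"
    and Sg_lower: "\<And>x. \<Psi>low * sqnorm n x \<le> bilin n Sg x x"
    and Sg_upper: "\<And>x. bilin n Sg x x \<le> \<Psi>high * sqnorm n x"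
    and \<Lambda>: "0 \<le> \<Lambda>low" "0 \<le> \<Lambda>high"
    and A_lower: "\<And>w. \<Lambda>low * sqnorm n w \<le> bilin n (mat_sandwich n S Q) w w"
    and A_upper: "\<And>w. bilin n (mat_sandwich n S Q) w w \<le> \<Lambda>high * sqnorm n w"
  shows "\<Lambda>low / \<Psi>high * sqnorm n v \<le> bilin n Q v v"
    and "bilin n Q v v \<le> \<Lambda>high / \<Psi>low * sqnorm n v"
proof -
  obtain x where x: "\<And>i. i < n \<Longrightarrow> mat_vec n Sg x i = v i"
    using coercive_symmetric_matrix_surj[OF mat_symmetric_gram[OF gram] \<Psi>(1) Sg_lower] by blast
  define w where "w = mat_vec n (\<lambda>i j. S j i) x"
  note w_bounds = gram_preimage_sqnorm_bounds[OF gram \<Psi> Sg_lower Sg_upper x, folded w_def]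
  have "bilin n Q v v = bilin n (mat_sandwich n S Q) w w"
    unfolding bilin_mat_sandwich using mat_vec_gram[OF gram] x unfolding w_def
    by (intro bilin_cong) simp_all
  moreover have "\<Lambda>low / \<Psi>high * sqnorm n v \<le> \<Lambda>low * sqnorm n w"
    using mult_left_mono[OF w_bounds(1) \<Lambda>(1)] by simp
  moreover have "\<Lambda>high * sqnorm n w \<le> \<Lambda>high / \<Psi>low * sqnorm n v"
    using mult_left_mono[OF w_bounds(2) \<Lambda>(2)] by simp
  ultimately show "\<Lambda>low / \<Psi>high * sqnorm n v \<le> bilin n Q v v"
    and "bilin n Q v v \<le> \<Lambda>high / \<Psi>low * sqnorm n v"
    using A_lower[of w] A_upper[of w] by linarith+
qed

lemma bilin_bounds_from_sandwich_eigenvalues: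
  assumes "0 < n" and gram: "\<forall>i<n. \<forall>j<n. Sg i j = (\<Sum>k<n. S i k * S j k)"
    and \<Psi>: "0 < \<Psi>low" "\<Psi>low \<le> \<Psi>high" and \<Lambda>: "0 \<le> \<Lambda>low" "0 \<le> \<Lambda>high"
    and "mat_symmetric n Q"
    and Sg_eig: "\<And>\<mu>. mat_eigenvalue n Sg \<mu> \<Longrightarrow> \<Psi>low \<le> \<mu> \<and> \<mu> \<le> \<Psi>high"
    and A_eig: "\<And>\<mu>. mat_eigenvalue n (mat_sandwich n S Q) \<mu> \<Longrightarrow> \<Lambda>low \<le> \<mu> \<and> \<mu> \<le> \<Lambda>high"
  shows "\<Lambda>low / \<Psi>high * sqnorm n v \<le> bilin n Q v v"
    and "bilin n Q v v \<le> \<Lambda>high / \<Psi>low * sqnorm n v"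
proof -
  have "\<Psi>low * sqnorm n x \<le> bilin n Sg x x" "bilin n Sg x x \<le> \<Psi>high * sqnorm n x" for x
    using Sg_eig mat_symmetric_gram[OF gram] by (intro bilin_ge_if_eigenvalues_ge bilin_le_if_eigenvalues_le \<open>0 < n\<close>; force)+
  moreover have "\<Lambda>low * sqnorm n w \<le> bilin n (mat_sandwich n S Q) w w"
    "bilin n (mat_sandwich n S Q) w w \<le> \<Lambda>high * sqnorm n w" for w
    using A_eig mat_symmetric_sandwich[OF \<open>mat_symmetric n Q\<close>]
    by (intro bilin_ge_if_eigenvalues_ge bilin_le_if_eigenvalues_le \<open>0 < n\<close>; force)+
  ultimately show "\<Lambda>low / \<Psi>high * sqnorm n v \<le> bilin n Q v v"
    and "bilin n Q v v \<le> \<Lambda>high / \<Psi>low * sqnorm n v"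
    using bilin_bounds_from_sandwich[OF gram \<Psi> _ _ \<Lambda>] by blast+
qed

section \<open>The excess risk\<close>

lemma quadratic_separation_ineq:
  fixes a b \<delta> eh eg :: real
  assumes ab: "0 < a" "a \<le> b" and far: "\<delta> / 2 < eh"
    and eg: "0 \<le> eg" and near: "6 * b / a * eg \<le> \<delta>"
  shows "a / 12 * \<delta>\<^sup>2 \<le> 2 / 3 * a * eh\<^sup>2 - 3 * b * eg\<^sup>2"
proof -
  have "0 \<le> 6 * b / a * eg"
    using ab eg by simp
  then have "0 \<le> \<delta>"
    using near by linarith
  then have "(\<delta> / 2)\<^sup>2 \<le> eh\<^sup>2"
    using far by (intro power_mono) auto
  then have h_part: "a / 6 * \<delta>\<^sup>2 \<le> 2 / 3 * a * eh\<^sup>2"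
    using ab(1) by (simp add: power_divide)
  have "eg = a / (6 * b) * (6 * b / a * eg)"
    using ab by simp
  also have "\<dots> \<le> a / (6 * b) * \<delta>"
    using near ab by (intro mult_left_mono) auto
  finally have "3 * b * eg\<^sup>2 \<le> 3 * b * (a / (6 * b) * \<delta>)\<^sup>2"
    using ab eg by (simp add: power_mono)
  also have "\<dots> = a / b * (a / 12 * \<delta>\<^sup>2)"
    using ab by (simp add: field_simps power2_eq_square)
  also have "\<dots> \<le> a / 12 * \<delta>\<^sup>2"
    using ab by (intro mult_left_le_one_le) auto
  finally show ?thesis
    using h_part by linarith
qed

lemma excess_risk_lower_bound:
  assumes sym: "mat_symmetric n Q" and ab: "0 < a" "a \<le> b"
    and lower: "\<And>v. a * sqnorm n v \<le> bilin n Q v v"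
    and upper: "\<And>v. bilin n Q v v \<le> b * sqnorm n v"
    and far: "\<delta> / 2 < emp_norm n X (\<lambda>x. f x - p x)"
    and near: "6 * b / a * emp_norm n X (\<lambda>x. f0 x - p x) \<le> \<delta>"
  shows "risk n X f0 S Q p + a / 12 * \<delta>\<^sup>2 \<le> risk n X f0 S Q f"
proof -
  define g where "g = (\<lambda>i. f0 (X i) - p (X i))"
  define h where "h = (\<lambda>i. f (X i) - p (X i))"
  have "2 * bilin n Q g h \<le> 3 * bilin n Q g g + bilin n Q h h / 3"
    using bilin_Young[OF sym bilin_nonneg_if_coercive[OF _ lower]] ab by simp
  then have "2 / 3 * a * sqnorm n h - 3 * b * sqnorm n g \<le> bilin n Q h h - 2 * bilin n Q g h"
    using lower[of h] upper[of g] by linarith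
  then have "(2 / 3 * a * sqnorm n h - 3 * b * sqnorm n g) / n \<le> risk n X f0 S Q f - risk n X f0 S Q p"
    unfolding risk_diff_eq[OF sym] g_def[symmetric] h_def[symmetric] by (rule divide_right_mono) simp
  moreover have "(2 / 3 * a * sqnorm n h - 3 * b * sqnorm n g) / n
      = 2 / 3 * a * (emp_norm n X (\<lambda>x. f x - p x))\<^sup>2 - 3 * b * (emp_norm n X (\<lambda>x. f0 x - p x))\<^sup>2"
    unfolding emp_norm_sq g_def h_def by (simp add: diff_divide_distrib)
  moreover have "a / 12 * \<delta>\<^sup>2
      \<le> 2 / 3 * a * (emp_norm n X (\<lambda>x. f x - p x))\<^sup>2 - 3 * b * (emp_norm n X (\<lambda>x. f0 x - p x))\<^sup>2"
    using quadratic_separation_ineq[OF ab far emp_norm_nonneg near] .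
  ultimately show ?thesis by linarith
qed

lemma ereal_INF_minus_ge:
  assumes "\<And>x. x \<in> A \<Longrightarrow> r + c \<le> F x"
  shows "ereal c \<le> (INF x\<in>A. ereal (F x)) - ereal r"
proof -
  have "ereal (r + c) \<le> (INF x\<in>A. ereal (F x))"
    using assms by (intro INF_greatest) simp
  then show ?thesis
    by (cases "INF x\<in>A. ereal (F x)" rule: ereal_cases) auto
qed

theorem lemmaS8:
  fixes n :: nat and X :: "nat \<Rightarrow> real^'d" and K :: "(real^'d) set"
    and f0 :: "real^'d \<Rightarrow> real"
    and Sigma S Q :: "nat \<Rightarrow> nat \<Rightarrow> real"
    and \<Psi>low \<Psi>high \<Lambda>low \<Lambda>high :: real
    and \<sigma> :: "real \<Rightarrow> real" and r :: nat and V M :: real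
    and pif0 :: "real^'d \<Rightarrow> real" and \<delta> :: real
  assumes n_pos: "0 < n"
    and K: "compact K" and X_in: "\<forall>i<n. X i \<in> K"
    and f0_cont: "continuous_on K f0"
    and Psi: "0 < \<Psi>low" "\<Psi>low \<le> \<Psi>high"
    and Lambda: "0 < \<Lambda>low" "\<Lambda>low \<le> 1" "1 \<le> \<Lambda>high"
    and sqrt_Sigma: "\<forall>i<n. \<forall>j<n. Sigma i j = (\<Sum>k<n. S i k * S j k)"
    and Sigma_eig: "\<forall>lam. mat_eigenvalue n Sigma lam \<longrightarrow> \<Psi>low \<le> lam \<and> lam \<le> \<Psi>high"
    and Q_pd: "mat_pos_def n Q"
    and Q_eig: "\<forall>lam. mat_eigenvalue n (mat_sandwich n S Q) lam \<longrightarrow> \<Lambda>low < lam \<and> lam < \<Lambda>high"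
    and \<sigma>_bounded: "bounded (range \<sigma>)"
    and \<sigma>_lipschitz: "\<exists>C. C-lipschitz_on UNIV \<sigma>"
    and proj_mem: "pif0 \<in> nn_class \<sigma> r V M"
    and proj_min: "\<forall>f\<in>nn_class \<sigma> r V M. emp_norm n X (\<lambda>x. f0 x - pif0 x) \<le> emp_norm n X (\<lambda>x. f0 x - f x)"
    and delta: "\<delta> \<ge> 6 * (\<Psi>high * \<Lambda>high) / (\<Psi>low * \<Lambda>low) * emp_norm n X (\<lambda>x. f0 x - pif0 x)"
  shows "(INF f\<in>{f. \<delta> / 2 < emp_norm n X (\<lambda>x. f x - pif0 x) \<and> emp_norm n X (\<lambda>x. f x - pif0 x) < \<delta>}.
            ereal (risk n X f0 S Q f)) - ereal (risk n X f0 S Q pif0)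
         \<ge> ereal (\<Lambda>low / (12 * \<Psi>high) * \<delta>\<^sup>2)"
proof -
  have symQ: "mat_symmetric n Q"
    using Q_pd by (simp add: mat_pos_def_def)
  have A_eig: "mat_eigenvalue n (mat_sandwich n S Q) \<mu> \<Longrightarrow> \<Lambda>low \<le> \<mu> \<and> \<mu> \<le> \<Lambda>high" for \<mu>
    using Q_eig by fastforce
  have "0 \<le> \<Lambda>low" "0 \<le> \<Lambda>high"
    using Lambda by simp_all
  note Q_bounds = bilin_bounds_from_sandwich_eigenvalues[OF n_pos sqrt_Sigma Psi this symQ
      Sigma_eig[rule_format] A_eig]
  have ratio: "\<Lambda>low / \<Psi>high \<le> \<Lambda>high / \<Psi>low"
    using Psi Lambda by (intro frac_le) auto
  have "6 * (\<Lambda>high / \<Psi>low) / (\<Lambda>low / \<Psi>high) = 6 * (\<Psi>high * \<Lambda>high) / (\<Psi>low * \<Lambda>low)"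
    by (simp add: field_simps)
  then have near: "6 * (\<Lambda>high / \<Psi>low) / (\<Lambda>low / \<Psi>high) * emp_norm n X (\<lambda>x. f0 x - pif0 x) \<le> \<delta>"
    using delta by (simp add: mult_ac)
  show ?thesis
  proof (rule ereal_INF_minus_ge)
    fix f assume "f \<in> {f. \<delta> / 2 < emp_norm n X (\<lambda>x. f x - pif0 x) \<and> emp_norm n X (\<lambda>x. f x - pif0 x) < \<delta>}"
    then show "risk n X f0 S Q pif0 + \<Lambda>low / (12 * \<Psi>high) * \<delta>\<^sup>2 \<le> risk n X f0 S Q f"
      using excess_risk_lower_bound[OF symQ _ ratio Q_bounds _ near] Psi Lambda
      by (simp add: mult.commute)
  qed
qed

end
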